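(* Let $d\in\mathbb{Z}_2$ with $d\equiv0\pmod 4$ and $\sqrt d\notin\mathbb{Z}_2$, and $f(x)=x^2+x-d$ on $\mathbb{Z}_2$. Then $f(1+2\mathbb{Z}_2)\subset 2\mathbb{Z}_2$ and $2\mathbb{Z}_2$ is a disjoint union of finitely many minimal components. More precisely, let $n_0=\lfloor v_2(d)/2\rfloor+1$. (1) If $v_2(d)=2$ and $v_2(d-4)=3$, then $2\mathbb{Z}_2$ consists of the three minimal components $4\mathbb{Z}_2$, $2+8\mathbb{Z}_2$, $6+8\mathbb{Z}_2$. (2) If $v_2(d)=2$ and $v_2(d-4)=4$, then $2\mathbb{Z}_2$ consists of the five minimal components $4\mathbb{Z}_2$, $2+16\mathbb{Z}_2$, $6+16\mathbb{Z}_2$, $10+16\mathbb{Z}_2$, $14+16\mathbb{Z}_2$. (3) If $v_2(d)\ge3$ and $v_2(d)$ is odd, then $2\mathbb{Z}_2=E_1\sqcup E_2$ with $$E_1=\bigsqcup_{2\le n\le n_0}\big(2^{n-1}+2^n\mathbb{Z}_2\big)-\{\text{I-}[n-2]\},\qquad E_2=2^{n_0}\mathbb{Z}_2-\{\text{I-}[n_0-1]\}.$$ (4) If $v_2(d)\ge3$ and $v_2(d)$ is even, then $2\mathbb{Z}_2=E'_1\sqcup E'_2\sqcup E'_3$ with $$E'_1=\bigsqcup_{2\le n\le n_0-1}\big(2^{n-1}+2^n\mathbb{Z}_2\big)-\{\text{I-}[n-2]\},\quad E'_2=2^{n_0}\mathbb{Z}_2-\{\text{I-}[n_0-2]\},$$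 $$E'_3=\big(2^{n_0-1}+2^{n_0}\mathbb{Z}_2\big)-\{\text{I-}[v_2(d-2^{v_2(d)})-n_0]\}.$$
   Context: $v_2$ is the $2$-adic valuation. A minimal component of $f$ is a clopen set $E$ with $f(E)\subset E$ and $f:E\to E$ minimal (all orbits dense). For $n\ge1$, $f_n$ is the induced map on $\mathbb{Z}/2^n\mathbb{Z}$, $f_n(x\bmod 2^n)=f(x)\bmod 2^n$. A cycle of $f_n$ (at level $n$) of length $k$ is a tuple $\sigma=(x_1,\dots,x_k)$ of distinct elements with $f_n(x_i)=x_{i+1}$, $f_n(x_k)=x_1$. The set $X_\sigma=\{y\in\mathbb{Z}/2^{n+1}\mathbb{Z}:y\bmod 2^n\in\sigma\}$ is $f_{n+1}$-invariant; its cycles are the lifts of $\sigma$. $\sigma$ grows if $X_\sigma$ is a single cycle of length $2k$ and splits if it is a union of two cycles of length $k$. For $k\ge0$, "$\sigma$ splits $k$ times and then its lifts grow forever" means every cycle at levels $n,\dots,n+k-1$ lying above $\sigma$ (reducing mod $2^n$ into $\sigma$) splits, and every cycle at every level $\ge n+k$ lying above $\sigma$ grows. A ball $F=x+2^n\mathbb{Z}_2$ with $(x\bmod 2^n)$ a fixed point of $f_n$ is of type I-$[k]$ if this 1-cycle splits $k$ times and then its lifts grow forever (then $F$ is a disjoint union of $2^k$ balls of radius $2^{-n-k}$, each a minimal component). $E=\bigsqcup_{n\in J}F_n-\{\text{I-}[k]\}$ means $E$ is the disjoint union of the $F_n$, each of type I-$[k]$ ($k$ possibly depending on $n$ as indicated);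 $F-\{\text{I-}[k]\}$ for a single set means $F$ is of type I-$[k]$. *)

theory Defs
  imports Main
begin

text \<open>A 2-adic integer x is represented by the sequence of its residues
  x n = x mod 2^n, with 0 <= x n < 2^n and x n = x (n+1) mod 2^n.\<close>

definition padic2 :: "(nat \<Rightarrow> int) \<Rightarrow> bool" where
  "padic2 x \<longleftrightarrow> (\<forall>n. 0 \<le> x n \<and> x n < 2 ^ n) \<and> (\<forall>n. x n = x (Suc n) mod 2 ^ n)"

definition z2_of_int :: "int \<Rightarrow> nat \<Rightarrow> int" where
  "z2_of_int k = (\<lambda>n. k mod 2 ^ n)"

definition z2_add :: "(nat \<Rightarrow> int) \<Rightarrow> (nat \<Rightarrow> int) \<Rightarrow> nat \<Rightarrow> int" where
  "z2_add x y = (\<lambda>n. (x n + y n) mod 2 ^ n)"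

definition z2_sub :: "(nat \<Rightarrow> int) \<Rightarrow> (nat \<Rightarrow> int) \<Rightarrow> nat \<Rightarrow> int" where
  "z2_sub x y = (\<lambda>n. (x n - y n) mod 2 ^ n)"

definition z2_mult :: "(nat \<Rightarrow> int) \<Rightarrow> (nat \<Rightarrow> int) \<Rightarrow> nat \<Rightarrow> int" where
  "z2_mult x y = (\<lambda>n. (x n * y n) mod 2 ^ n)"

text \<open>2-adic valuation of a nonzero 2-adic integer (junk value for 0; it is
  only applied to nonzero elements under the hypotheses of the theorem).\<close>
definition v2 :: "(nat \<Rightarrow> int) \<Rightarrow> nat" where
  "v2 x = (LEAST n. x (Suc n) \<noteq> 0)"

definition ball2 :: "int \<Rightarrow> nat \<Rightarrow> (nat \<Rightarrow> int) set" where
  "ball2 a n = {x. padic2 x \<and> x n = a mod 2 ^ n}"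

definition fmap :: "(nat \<Rightarrow> int) \<Rightarrow> (nat \<Rightarrow> int) \<Rightarrow> nat \<Rightarrow> int" where
  "fmap d x = z2_sub (z2_add (z2_mult x x) x) d"

definition clopen2 :: "(nat \<Rightarrow> int) set \<Rightarrow> bool" where
  "clopen2 E \<longleftrightarrow> E \<subseteq> Collect padic2
     \<and> (\<forall>x\<in>E. \<exists>n. ball2 (x n) n \<subseteq> E)
     \<and> (\<forall>x. padic2 x \<and> x \<notin> E \<longrightarrow> (\<exists>n. ball2 (x n) n \<inter> E = {}))"

definition orbit_dense :: "((nat \<Rightarrow> int) \<Rightarrow> nat \<Rightarrow> int) \<Rightarrow> (nat \<Rightarrow> int) \<Rightarrow> (nat \<Rightarrow> int) set \<Rightarrow> bool" where
  "orbit_dense f x E \<longleftrightarrow> (\<forall>y\<in>E. \<forall>n. \<exists>j. (f ^^ j) x \<in> ball2 (y n) n)"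

definition minimal_component :: "(nat \<Rightarrow> int) \<Rightarrow> (nat \<Rightarrow> int) set \<Rightarrow> bool" where
  "minimal_component d E \<longleftrightarrow> E \<noteq> {} \<and> clopen2 E \<and> fmap d ` E \<subseteq> E
     \<and> (\<forall>x\<in>E. orbit_dense (fmap d) x E)"

section \<open>Finite level dynamics f_n on Z/2^n Z (represented by {0..<2^n})\<close>

definition fn :: "(nat \<Rightarrow> int) \<Rightarrow> nat \<Rightarrow> int \<Rightarrow> int" where
  "fn d m a = (a ^ 2 + a - d m) mod 2 ^ m"

text \<open>A cycle of f_m, represented by its underlying set (a single orbit).\<close>
definition cycle_at :: "(nat \<Rightarrow> int) \<Rightarrow> nat \<Rightarrow> int set \<Rightarrow> bool" where
  "cycle_at d m C \<longleftrightarrow> C \<subseteq> {0..<2 ^ m} \<and> C \<noteq> {}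
     \<and> (\<forall>a\<in>C. C = range (\<lambda>j. (fn d m ^^ j) a))"

definition lifts :: "nat \<Rightarrow> int set \<Rightarrow> int set" where
  "lifts m C = {y. 0 \<le> y \<and> y < 2 ^ Suc m \<and> y mod 2 ^ m \<in> C}"

definition grows :: "(nat \<Rightarrow> int) \<Rightarrow> nat \<Rightarrow> int set \<Rightarrow> bool" where
  "grows d m C \<longleftrightarrow> cycle_at d (Suc m) (lifts m C)"

definition splits :: "(nat \<Rightarrow> int) \<Rightarrow> nat \<Rightarrow> int set \<Rightarrow> bool" where
  "splits d m C \<longleftrightarrow> (\<exists>C1 C2. cycle_at d (Suc m) C1 \<and> cycle_at d (Suc m) C2
     \<and> C1 \<inter> C2 = {} \<and> C1 \<union> C2 = lifts m C \<and> card C1 = card C \<and> card C2 = card C)"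

definition split_then_grow :: "(nat \<Rightarrow> int) \<Rightarrow> nat \<Rightarrow> int set \<Rightarrow> nat \<Rightarrow> bool" where
  "split_then_grow d n S k \<longleftrightarrow>
     (\<forall>m C. n \<le> m \<and> m < n + k \<and> cycle_at d m C \<and> (\<forall>y\<in>C. y mod 2 ^ n \<in> S) \<longrightarrow> splits d m C)
   \<and> (\<forall>m C. n + k \<le> m \<and> cycle_at d m C \<and> (\<forall>y\<in>C. y mod 2 ^ n \<in> S) \<longrightarrow> grows d m C)"

definition typeI :: "(nat \<Rightarrow> int) \<Rightarrow> int \<Rightarrow> nat \<Rightarrow> nat \<Rightarrow> bool" where
  "typeI d a n k \<longleftrightarrow> fn d n (a mod 2 ^ n) = a mod 2 ^ n \<and> split_then_grow d n {a mod 2 ^ n} k"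

end

theory Submission
  imports Defs
begin

text \<open>If \<open>v\<^sub>2(y\<^sup>2 - d) = N\<close> for all \<open>y\<close> in a ball \<open>a + 2^n\<int>\<^sub>2\<close> with \<open>n \<le> N\<close>, then
  \<open>f(y) = y + (y\<^sup>2 - d) = y + 2^N\<cdot>odd\<close> there: \<open>f\<close> fixes the ball modulo \<open>2^N\<close>, and inductively
  \<open>f^(2^k)(y) \<equiv> y + 2^(N+k)\<close> modulo \<open>2^(N+k+1)\<close>, so \<open>f\<close> is an odometer on each sub-ball of
  radius \<open>2^-N\<close>. Such sub-balls are minimal components, and the ball itself is of type I-[N-n].

  With \<open>v = v\<^sub>2(d) \<ge> 2\<close> and \<open>n\<^sub>0 = \<lfloor>v/2\<rfloor> + 1\<close>, the set \<open>2\<int>\<^sub>2\<close> is covered by the balls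
  \<open>2^(n-1) + 2^n\<int>\<^sub>2\<close> (\<open>2 \<le> n \<le> n\<^sub>0\<close>) and \<open>2^n\<^sub>0\<int>\<^sub>2\<close>. On the first ones \<open>v\<^sub>2(y\<^sup>2 - d) = 2n - 2\<close>
  as long as \<open>2n - 1 \<le> v\<close>, and on the last one it is \<open>v\<close>. The remaining case is \<open>v = 2h\<close> and
  \<open>n = h + 1\<close>: there \<open>y\<^sup>2 \<equiv> 2^v\<close> modulo \<open>2^(v+3)\<close>, so \<open>v\<^sub>2(y\<^sup>2 - d) = v\<^sub>2(d - 2^v)\<close>, which is
  \<open>v + 1\<close> or \<open>v + 2\<close> because \<open>d \<equiv> 2^v\<close> modulo \<open>2^(v+3)\<close> would make \<open>d\<close> a square by Hensel's lemma.\<close>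

lemma mod_eq_iff_dvd_diff:
  assumes "0 \<le> r" "r < M"
  shows "(X::int) mod M = r \<longleftrightarrow> M dvd X - r"
  using assms by (metis mod_eq_dvd_iff mod_pos_pos_trivial)

lemma mod_pow2_eq_le: "n \<le> N \<Longrightarrow> (u::int) mod 2^N = w mod 2^N \<Longrightarrow> u mod 2^n = w mod 2^n"
  by (metis le_imp_power_dvd mod_mod_cancel)

lemma mod_pow2_Suc_cases: "(y::int) mod 2^Suc n = y mod 2^n \<or> y mod 2^Suc n = y mod 2^n + 2^n"
proof -
  have "y mod (2^n * 2) = 2^n * (y div 2^n mod 2) + y mod 2^n"
    by (rule zmod_zmult2_eq) simp
  moreover have "y div 2^n mod 2 = 0 \<or> y div 2^n mod 2 = 1" by auto
  ultimately show ?thesis by (auto simp: mult.commute)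
qed

lemma mod_pow2_Suc_iff:
  "(y::int) mod 2^n = c mod 2^n \<longleftrightarrow>
     y mod 2^Suc n = c mod 2^Suc n \<or> y mod 2^Suc n = (c + 2^n) mod 2^Suc n"
proof
  assume "y mod 2^n = c mod 2^n"
  then obtain k where k: "y - c = 2^n * k" by (metis mod_eq_dvd_iff dvdE)
  show "y mod 2^Suc n = c mod 2^Suc n \<or> y mod 2^Suc n = (c + 2^n) mod 2^Suc n"
  proof (cases "even k")
    case True
    then obtain l where "k = 2 * l" by (rule evenE)
    then have "y - c = 2^Suc n * l" using k by simp
    then show ?thesis by (simp add: mod_eq_dvd_iff)
  next
    case False
    then obtain l where "k = 2 * l + 1" by (rule oddE)
    then have "y - (c + 2^n) = 2^Suc n * l" using k by (simp add: algebra_simps)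
    then show ?thesis by (simp add: mod_eq_dvd_iff)
  qed
next
  assume "y mod 2^Suc n = c mod 2^Suc n \<or> y mod 2^Suc n = (c + 2^n) mod 2^Suc n"
  then obtain c' where "y mod 2^Suc n = c' mod 2^Suc n" "c' mod 2^n = c mod 2^n" by auto
  then show "y mod 2^n = c mod 2^n" using mod_pow2_eq_le[of n "Suc n" y c'] by simp
qed

lemma pow2_times_odd:
  assumes "(y::int) mod 2^Suc p = 2^p"
  obtains q where "y = 2^p * (2*q + 1)"
proof
  show "y = 2^p * (2 * (y div 2^Suc p) + 1)"
    using div_mult_mod_eq[of y "2^Suc p"] assms by (simp add: algebra_simps)
qed

lemma padic2_range: "padic2 x \<Longrightarrow> 0 \<le> x n \<and> x n < 2^n"
  unfolding padic2_def by blast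

lemma padic2_mod: "padic2 x \<Longrightarrow> x n mod 2^n = x n"
  using padic2_range by (simp add: mod_pos_pos_trivial)

lemma padic2I:
  "(\<And>n. 0 \<le> x n) \<Longrightarrow> (\<And>n. x n < 2^n) \<Longrightarrow> (\<And>n. x n = x (Suc n) mod 2^n) \<Longrightarrow> padic2 x"
  unfolding padic2_def by blast

lemma padic2_coherent:
  assumes "padic2 x" "m \<le> n"
  shows "x m = x n mod 2^m"
  using assms(2)
proof (induction n rule: dec_induct)
  case base
  show ?case using padic2_mod[OF assms(1)] by simp
next
  case (step n)
  have "x n = x (Suc n) mod 2^n" using assms(1) unfolding padic2_def by blast
  then have "x m = (x (Suc n) mod 2^n) mod 2^m" using step.IH by simp
  also have "\<dots> = x (Suc n) mod 2^m" using step.hyps by (simp add: mod_mod_cancel le_imp_power_dvd)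
  finally show ?case .
qed

lemma padic2_Suc_mod: "padic2 x \<Longrightarrow> x (Suc n) mod 2^n = x n mod 2^n"
  using padic2_coherent[of x n "Suc n"] by simp

lemma padic2_Suc_cases: "padic2 x \<Longrightarrow> x (Suc n) = x n \<or> x (Suc n) = x n + 2^n"
  using mod_pow2_Suc_cases[of "x (Suc n)" n] padic2_coherent[of x n "Suc n"] padic2_mod[of x "Suc n"]
  by (simp del: power_Suc)

lemma padic2_z2_of_int: "padic2 (z2_of_int c)"
  by (rule padic2I) (simp_all add: z2_of_int_def mod_mod_cancel)

lemma mem_ball2: "x \<in> ball2 c n \<longleftrightarrow> padic2 x \<and> x n = c mod 2^n"
  by (simp add: ball2_def)

lemma ball2_split: "ball2 c n = ball2 c (n + 1) \<union> ball2 (c + 2^n) (n + 1)"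
  unfolding Suc_eq_plus1[symmetric]
proof (rule set_eqI)
  fix x
  show "x \<in> ball2 c n \<longleftrightarrow> x \<in> ball2 c (Suc n) \<union> ball2 (c + 2^n) (Suc n)"
  proof (cases "padic2 x")
    case True
    then have "x n = x (Suc n) mod 2^n" "x (Suc n) mod 2^Suc n = x (Suc n)"
      using padic2_coherent[of x n "Suc n"] padic2_mod[of x "Suc n"] by simp_all
    then show ?thesis
      using True mod_pow2_Suc_iff[of "x (Suc n)" n c] by (simp add: mem_ball2 del: power_Suc)
  qed (simp add: mem_ball2)
qed

lemma disjnt_ball2:
  assumes "n \<le> m" "c' mod 2^n \<noteq> c mod 2^n"
  shows "disjnt (ball2 c n) (ball2 c' m)"
  unfolding disjnt_def
proof (rule equals0I)
  fix x assume "x \<in> ball2 c n \<inter> ball2 c' m"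
  then have x: "padic2 x" "x n = c mod 2^n" "x m = c' mod 2^m" by (auto simp: mem_ball2)
  have "x n = x m mod 2^n" by (rule padic2_coherent[OF x(1) assms(1)])
  also have "\<dots> = c' mod 2^n" using x(3) mod_pow2_eq_le[OF assms(1), of "x m" c'] by simp
  finally show False using x(2) assms(2) by simp
qed

section \<open>The integer model of the map\<close>

definition qmap :: "int \<Rightarrow> int \<Rightarrow> int" where
  "qmap D z = z^2 + z - D"

lemma qmap_mod_cong:
  assumes "(a::int) mod m = b mod m" "D mod m = D' mod m"
  shows "qmap D a mod m = qmap D' b mod m"
proof -
  have "a^2 mod m = b^2 mod m" using assms(1) by (metis power_mod)
  then have "(a^2 + a) mod m = (b^2 + b) mod m" using assms(1) by (rule mod_add_cong)
  then show ?thesis using assms(2) unfolding qmap_def by (rule mod_diff_cong)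
qed

lemma fn_eq_qmap_mod: "fn d m b = qmap (d m) b mod 2^m"
  by (simp add: fn_def qmap_def)

lemma funpow_qmap_mod: "(qmap D ^^ j) (x mod m) mod m = (qmap D ^^ j) x mod m"
proof (induction j)
  case (Suc j)
  have "qmap D ((qmap D ^^ j) (x mod m)) mod m = qmap D ((qmap D ^^ j) x) mod m"
    by (rule qmap_mod_cong[OF Suc refl])
  then show ?case by simp
qed simp

lemma fn_eq_qmap: "D mod 2^m = d m mod 2^m \<Longrightarrow> fn d m (z mod 2^m) = qmap D z mod 2^m"
  unfolding fn_def qmap_def[symmetric] by (rule qmap_mod_cong) simp_all

lemma funpow_fn_eq_qmap:
  assumes "0 \<le> a" "a < 2^m" "D mod 2^m = d m mod 2^m"
  shows "(fn d m ^^ j) a = (qmap D ^^ j) a mod 2^m"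
proof (induction j)
  case 0
  show ?case using assms(1,2) by simp
next
  case (Suc j)
  have "fn d m ((qmap D ^^ j) a mod 2^m) = qmap D ((qmap D ^^ j) a) mod 2^m"
    by (rule fn_eq_qmap[where d = d, OF assms(3)])
  then show ?case using Suc by simp
qed

lemma fmap_apply: "fmap d x n = fn d n (x n)"
  by (simp add: fmap_def fn_def z2_sub_def z2_add_def z2_mult_def mod_simps power2_eq_square)

lemma padic2_fmap:
  assumes d: "padic2 d" and x: "padic2 x"
  shows "padic2 (fmap d x)"
proof (rule padic2I)
  fix n
  show "0 \<le> fmap d x n" "fmap d x n < 2^n" by (simp_all add: fmap_apply fn_def)
  have "x n mod 2^n = x (Suc n) mod 2^n" "d n mod 2^n = d (Suc n) mod 2^n"
    using padic2_coherent[OF x, of n "Suc n"] padic2_coherent[OF d, of n "Suc n"] by simp_all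
  then have "qmap (d n) (x n) mod 2^n = qmap (d (Suc n)) (x (Suc n)) mod 2^n"
    by (rule qmap_mod_cong)
  then show "fmap d x n = fmap d x (Suc n) mod 2^n"
    by (simp add: fmap_apply fn_def qmap_def mod_mod_cancel)
qed

lemma funpow_fmap:
  assumes "padic2 d" "padic2 x"
  shows "padic2 ((fmap d ^^ j) x) \<and> ((fmap d ^^ j) x) n = (fn d n ^^ j) (x n)"
proof (induction j)
  case (Suc j)
  have "(fmap d ^^ Suc j) x = fmap d ((fmap d ^^ j) x)" by simp
  moreover have "fmap d ((fmap d ^^ j) x) n = fn d n (((fmap d ^^ j) x) n)" by (rule fmap_apply)
  ultimately show ?case using Suc padic2_fmap[OF assms(1)] by simp
qed (simp add: assms)

section \<open>Constant valuation of \<open>y\<^sup>2 - d\<close>: odometer dynamics\<close>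

definition sqval_exact :: "int \<Rightarrow> int \<Rightarrow> nat \<Rightarrow> nat \<Rightarrow> bool" where
  "sqval_exact D a n N \<longleftrightarrow> (\<forall>y::int. y mod 2^n = a mod 2^n \<longrightarrow> (y^2 - D) mod 2^Suc N = 2^N)"

lemma sqval_exact_qmap:
  "sqval_exact D a n N \<Longrightarrow> y mod 2^n = a mod 2^n \<Longrightarrow> 2^Suc N dvd qmap D y - y - 2^N"
  unfolding sqval_exact_def qmap_def
  by (drule spec[of _ y]) (auto simp: mod_eq_iff_dvd_diff algebra_simps)

lemma funpow_qmap_mod_fixed:
  assumes "sqval_exact D a n N" "n \<le> N" "y mod 2^n = a mod 2^n"
  shows "(qmap D ^^ j) y mod 2^N = y mod 2^N"
proof (induction j)
  case (Suc j)
  have "(qmap D ^^ j) y mod 2^n = a mod 2^n"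
    using mod_pow2_eq_le[OF assms(2) Suc] assms(3) by simp
  then have "2^Suc N dvd qmap D ((qmap D ^^ j) y) - (qmap D ^^ j) y - 2^N"
    by (rule sqval_exact_qmap[OF assms(1)])
  then have "2^N dvd qmap D ((qmap D ^^ j) y) - (qmap D ^^ j) y - 2^N"
    by (rule dvd_trans[rotated]) simp
  then have "2^N dvd qmap D ((qmap D ^^ j) y) - (qmap D ^^ j) y"
    by (metis dvd_add_left_iff diff_add_cancel dvd_refl)
  then have "qmap D ((qmap D ^^ j) y) mod 2^N = (qmap D ^^ j) y mod 2^N"
    by (simp add: mod_eq_dvd_iff)
  then show ?case using Suc by simp
qed simp

lemma even_of_mod_pow2: "1 \<le> n \<Longrightarrow> even a \<Longrightarrow> (y::int) mod 2^n = a mod 2^n \<Longrightarrow> even y"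
  using mod_pow2_eq_le[of 1 n y a] by (simp add: even_iff_mod_2_eq_zero)

lemma qmap_increment:
  assumes "even u" "4 dvd h"
  shows "4 * h dvd qmap D (u + h) - qmap D u - h"
proof -
  obtain k l where "u = 2 * k" "h = 4 * l" using assms by (auto elim!: evenE dvdE)
  then have "qmap D (u + h) - qmap D u - h = (4 * h) * (k + l)"
    by (simp add: qmap_def algebra_simps power2_eq_square)
  then show ?thesis by simp
qed

lemma funpow_qmap_increment:
  assumes "sqval_exact D a n N" "1 \<le> n" "n \<le> N" "even a"
  shows "x mod 2^n = a mod 2^n \<Longrightarrow> 4 dvd h
    \<Longrightarrow> 4 * h dvd (qmap D ^^ j) (x + h) - (qmap D ^^ j) x - h"
proof (induction j arbitrary: x h)
  case (Suc j)
  define u where "u = (qmap D ^^ j) x"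
  define h' where "h' = (qmap D ^^ j) (x + h) - u"
  have "4 * h dvd h' - h" using Suc.IH[OF Suc.prems] unfolding u_def h'_def by (simp add: algebra_simps)
  then obtain z where "h' - h = 4 * h * z" by (rule dvdE)
  then have "h' = h * (1 + 4 * z)" by (simp add: algebra_simps)
  then have hh': "4 * h dvd 4 * h'" and "4 dvd h'" using Suc.prems(2) by auto
  have "u mod 2^N = x mod 2^N"
    unfolding u_def by (rule funpow_qmap_mod_fixed[OF assms(1,3) Suc.prems(1)])
  then have "u mod 2^n = a mod 2^n" using mod_pow2_eq_le[OF assms(3)] Suc.prems(1) by metis
  then have "even u" by (rule even_of_mod_pow2[OF assms(2,4)])
  then have "4 * h' dvd qmap D (u + h') - qmap D u - h'" by (rule qmap_increment[OF _ \<open>4 dvd h'\<close>])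
  then have "4 * h dvd qmap D (u + h') - qmap D u - h'" using hh' by (rule dvd_trans[rotated])
  then have "4 * h dvd (qmap D (u + h') - qmap D u - h') + (h' - h)"
    using \<open>4 * h dvd h' - h\<close> by (rule dvd_add)
  then show ?case unfolding u_def h'_def by (simp add: algebra_simps)
qed simp

lemma funpow_qmap_pow2:
  assumes C: "sqval_exact D a n N" and "1 \<le> n" "n \<le> N" "2 \<le> N" "even a"
  shows "x mod 2^n = a mod 2^n \<Longrightarrow> 2^(N+k+1) dvd (qmap D ^^ (2^k)) x - x - 2^(N+k)"
proof (induction k arbitrary: x)
  case 0
  show ?case using sqval_exact_qmap[OF C 0] by simp
next
  case (Suc k)
  define G where "G = qmap D ^^ (2^k)"
  define P where "P = (2::int)^(N+k)"
  have GG: "(qmap D ^^ (2^Suc k)) x = G (G x)"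
    unfolding G_def by (simp only: power_Suc mult_2 funpow_add comp_apply)
  have P: "(2::int)^(N+k+1) = 2*P" "(2::int)^(N + Suc k + 1) = 4*P" "(2::int)^(N + Suc k) = 2*P"
    unfolding P_def by simp_all
  obtain s where s: "G x - x - P = 2*P*s"
    using Suc.IH[OF Suc.prems] unfolding G_def P(1) P_def by (auto elim!: dvdE)
  define h where "h = G x - x"
  have hs: "h = P * (1 + 2*s)" using s unfolding h_def by (simp add: algebra_simps)
  have "(2::int)^2 dvd P" unfolding P_def using assms(4) by (intro le_imp_power_dvd) simp
  then have "4 dvd h" unfolding hs by simp
  then have "4 * h dvd G (x + h) - G x - h"
    using funpow_qmap_increment[OF assms(1,2,3,5) Suc.prems] unfolding G_def by blast
  then obtain z where z: "G (x + h) - G x - h = 4*h*z" by (rule dvdE)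
  have "(qmap D ^^ (2^Suc k)) x - x - 2^(N + Suc k) = (4*P) * ((1 + 2*s)*z + s)"
    unfolding GG P(3) using z hs by (simp add: h_def algebra_simps)
  then show ?case unfolding P(2) by simp
qed

text \<open>Each block of \<open>2^k\<close> steps fixes the residue mod \<open>2^(N+k)\<close> and flips the next digit.\<close>
lemma qmap_orbit_reaches:
  assumes C: "sqval_exact D a n N" and n: "1 \<le> n" "n \<le> N" "2 \<le> N" and "even a"
    and x: "x mod 2^n = a mod 2^n" and y: "y mod 2^n = a mod 2^n" and xy: "x mod 2^N = y mod 2^N"
  shows "\<exists>j. (qmap D ^^ j) x mod 2^(N+k) = y mod 2^(N+k)"
proof (induction k)
  case 0
  show ?case using xy by (intro exI[of _ 0]) simp
next
  case (Suc k)
  then obtain j where j: "(qmap D ^^ j) x mod 2^(N+k) = y mod 2^(N+k)" by blast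
  define z where "z = (qmap D ^^ j) x"
  define P where "P = (2::int)^(N+k)"
  have P: "(2::int)^(N + Suc k) = 2*P" unfolding P_def by simp
  show ?case
  proof (cases "z mod (2*P) = y mod (2*P)")
    case True
    then show ?thesis unfolding z_def P by blast
  next
    case False
    have "z mod 2^N = x mod 2^N" unfolding z_def by (rule funpow_qmap_mod_fixed[OF C n(2) x])
    then have "z mod 2^n = a mod 2^n" using mod_pow2_eq_le[OF n(2)] x by metis
    then obtain s where s: "(qmap D ^^ (2^k)) z - z - P = 2*P*s"
      using funpow_qmap_pow2[OF C n \<open>even a\<close>] unfolding P_def by (fastforce elim!: dvdE)
    obtain t where t: "z - y = P * t" using j unfolding z_def P_def by (auto simp: mod_eq_dvd_iff elim!: dvdE)
    have "odd t"
    proof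
      assume "even t"
      then have "2*P dvd z - y" using t by (auto elim!: evenE)
      then show False using False by (simp add: mod_eq_dvd_iff)
    qed
    then obtain r where r: "t = 2*r + 1" by (rule oddE)
    have "(qmap D ^^ (2^k)) z - y = (2*P) * (r + 1 + s)"
      using s t r by (simp add: algebra_simps)
    then have "(qmap D ^^ (2^k + j)) x mod (2*P) = y mod (2*P)"
      unfolding z_def funpow_add comp_def by (simp add: mod_eq_dvd_iff)
    then show ?thesis unfolding P by blast
  qed
qed

text \<open>\<open>v\<^sub>2(y\<^sup>2 - d) = N\<close> on the ball \<open>a + 2^n\<int>\<^sub>2\<close>; only \<open>d mod 2^(N+1)\<close> matters.\<close>
definition sqval_on :: "(nat \<Rightarrow> int) \<Rightarrow> int \<Rightarrow> nat \<Rightarrow> nat \<Rightarrow> bool" where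
  "sqval_on d a n N \<longleftrightarrow> sqval_exact (d (Suc N)) a n N"

lemma sqval_exact_mod_cong:
  assumes "sqval_exact D a n N" "D' mod 2^Suc N = D mod 2^Suc N"
  shows "sqval_exact D' a n N"
  unfolding sqval_exact_def
proof (intro allI impI)
  fix y :: int assume "y mod 2^n = a mod 2^n"
  then have "(y^2 - D) mod 2^Suc N = 2^N" using assms(1) unfolding sqval_exact_def by blast
  moreover have "(y^2 - D') mod 2^Suc N = (y^2 - D) mod 2^Suc N" by (rule mod_diff_cong[OF refl assms(2)])
  ultimately show "(y^2 - D') mod 2^Suc N = 2^N" by simp
qed

lemma sqval_on_exact:
  assumes "padic2 d" "sqval_on d a n N" "Suc N \<le> M"
  shows "sqval_exact (d M) a n N"
proof -
  have "d M mod 2^Suc N = d (Suc N) mod 2^Suc N"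
    using padic2_coherent[OF assms(1,3)] padic2_mod[OF assms(1)] by simp
  then show ?thesis using assms(2) unfolding sqval_on_def by (rule sqval_exact_mod_cong[rotated])
qed

lemma sqval_on_subclass:
  assumes "sqval_on d a n N" "n \<le> M" "c mod 2^n = a mod 2^n"
  shows "sqval_on d c M N"
  unfolding sqval_on_def sqval_exact_def
proof (intro allI impI)
  fix y :: int assume "y mod 2^M = c mod 2^M"
  then have "y mod 2^n = a mod 2^n" using mod_pow2_eq_le[OF assms(2)] assms(3) by metis
  then show "(y^2 - d (Suc N)) mod 2^Suc N = 2^N" using assms(1) unfolding sqval_on_def sqval_exact_def by blast
qed

lemma fn_fixed_below:
  assumes d: "padic2 d" and Q: "sqval_on d a n N" and b: "b mod 2^n = a mod 2^n"
    and M: "M \<le> N" "0 \<le> b" "b < 2^M"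
  shows "fn d M b = b"
proof -
  have "2^Suc N dvd qmap (d (Suc N)) b - b - 2^N"
    using sqval_exact_qmap[OF Q[unfolded sqval_on_def] b] .
  moreover have "(2::int)^M dvd 2^Suc N" "(2::int)^M dvd 2^N" using M(1) by (simp_all add: le_imp_power_dvd)
  ultimately have "2^M dvd (qmap (d (Suc N)) b - b - 2^N) + 2^N" by (meson dvd_add dvd_trans)
  then have "qmap (d (Suc N)) b mod 2^M = b mod 2^M" by (simp add: mod_eq_dvd_iff)
  moreover have "qmap (d (Suc N)) b mod 2^M = qmap (d M) b mod 2^M"
    using padic2_coherent[OF d, of M "Suc N"] M(1) by (intro qmap_mod_cong) simp_all
  ultimately show ?thesis using M(2,3) by (simp add: fn_eq_qmap_mod)
qed

lemma funpow_fn_mod: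
  assumes d: "padic2 d" and "m \<le> M" "0 \<le> b" "b < 2^M"
  shows "(fn d M ^^ j) b mod 2^m = (fn d m ^^ j) (b mod 2^m)"
proof -
  have "d M mod 2^m = d m mod 2^m" using padic2_coherent[OF d \<open>m \<le> M\<close>] by simp
  then have "(fn d m ^^ j) (b mod 2^m) = (qmap (d M) ^^ j) (b mod 2^m) mod 2^m"
    by (intro funpow_fn_eq_qmap) simp_all
  also have "\<dots> = (qmap (d M) ^^ j) b mod 2^m" by (rule funpow_qmap_mod)
  also have "\<dots> = ((qmap (d M) ^^ j) b mod 2^M) mod 2^m"
    using \<open>m \<le> M\<close> by (simp add: mod_mod_cancel le_imp_power_dvd)
  also have "(qmap (d M) ^^ j) b mod 2^M = (fn d M ^^ j) b"
    using assms(3,4) by (intro funpow_fn_eq_qmap[symmetric]) simp_all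
  finally show ?thesis ..
qed

text \<open>Orbits of \<open>f\<^sub>m\<close> are computed with the lift \<open>d (m+1)\<close> of \<open>d m\<close>: for \<open>m = N\<close> only that lift
  carries the valuation hypothesis.\<close>
lemma funpow_fn_mod_fixed:
  assumes d: "padic2 d" and Q: "sqval_on d a n N" and "n \<le> N" "N \<le> m"
    and b: "0 \<le> b" "b < 2^m" "b mod 2^n = a mod 2^n"
  shows "(fn d m ^^ j) b mod 2^N = b mod 2^N"
proof -
  have C: "sqval_exact (d (Suc m)) a n N" using sqval_on_exact[OF d Q] \<open>N \<le> m\<close> by simp
  have "(fn d m ^^ j) b = (qmap (d (Suc m)) ^^ j) b mod 2^m"
    using padic2_Suc_mod[OF d] b by (intro funpow_fn_eq_qmap) simp_all
  then have "(fn d m ^^ j) b mod 2^N = (qmap (d (Suc m)) ^^ j) b mod 2^N"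
    using \<open>N \<le> m\<close> by (simp add: mod_mod_cancel le_imp_power_dvd)
  also have "\<dots> = b mod 2^N" by (rule funpow_qmap_mod_fixed[OF C \<open>n \<le> N\<close> b(3)])
  finally show ?thesis .
qed

lemma fn_orbit_reaches:
  assumes d: "padic2 d" and Q: "sqval_on d a n N" and "even a" "1 \<le> n" "n \<le> N" "2 \<le> N" "N \<le> m"
    and b: "0 \<le> b" "b < 2^m" "b mod 2^n = a mod 2^n"
    and c: "0 \<le> c" "c < 2^m" "b mod 2^N = c mod 2^N"
  shows "\<exists>j. (fn d m ^^ j) b = c"
proof -
  have C: "sqval_exact (d (Suc m)) a n N" using sqval_on_exact[OF d Q] \<open>N \<le> m\<close> by simp
  have "c mod 2^n = a mod 2^n" using mod_pow2_eq_le[OF \<open>n \<le> N\<close> c(3)] b(3) by simp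
  then obtain j where "(qmap (d (Suc m)) ^^ j) b mod 2^(N + (m - N)) = c mod 2^(N + (m - N))"
    using qmap_orbit_reaches[OF C assms(4-6,3) b(3) _ c(3)] by blast
  moreover have "(fn d m ^^ j) b = (qmap (d (Suc m)) ^^ j) b mod 2^m"
    using padic2_Suc_mod[OF d] b by (intro funpow_fn_eq_qmap) simp_all
  ultimately show ?thesis using \<open>N \<le> m\<close> c(1,2) by auto
qed

lemma clopen2_ball2: "clopen2 (ball2 c N)"
  unfolding clopen2_def
proof (intro conjI ballI allI impI)
  show "ball2 c N \<subseteq> Collect padic2" by (auto simp: mem_ball2)
next
  fix x assume "x \<in> ball2 c N"
  then have "ball2 (x N) N \<subseteq> ball2 c N" by (auto simp: mem_ball2)
  then show "\<exists>n. ball2 (x n) n \<subseteq> ball2 c N" by blast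
next
  fix x assume x: "padic2 x \<and> x \<notin> ball2 c N"
  then have "ball2 (x N) N \<inter> ball2 c N = {}" using padic2_mod[of x N] by (auto simp: mem_ball2)
  then show "\<exists>n. ball2 (x n) n \<inter> ball2 c N = {}" by blast
qed

lemma minimal_component_ball:
  assumes d: "padic2 d" and "even c" "2 \<le> N" and Q: "sqval_on d c N N"
  shows "minimal_component d (ball2 c N)"
  unfolding minimal_component_def
proof (intro conjI ballI)
  show "ball2 c N \<noteq> {}" using padic2_z2_of_int[of c] by (auto simp: mem_ball2 z2_of_int_def)
  show "clopen2 (ball2 c N)" by (rule clopen2_ball2)
next
  show "fmap d ` ball2 c N \<subseteq> ball2 c N"
  proof
    fix z assume "z \<in> fmap d ` ball2 c N"
    then obtain x where x: "padic2 x" "x N = c mod 2^N" "z = fmap d x" by (auto simp: mem_ball2)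
    have "fn d N (x N) = x N" using x padic2_range[OF x(1)] by (intro fn_fixed_below[OF d Q]) simp_all
    then show "z \<in> ball2 c N" using x padic2_fmap[OF d x(1)] by (simp add: mem_ball2 fmap_apply)
  qed
next
  fix x assume x: "x \<in> ball2 c N"
  show "orbit_dense (fmap d) x (ball2 c N)" unfolding orbit_dense_def
  proof (intro ballI allI)
    fix y n assume y: "y \<in> ball2 c N"
    define m where "m = max n N"
    have "n \<le> m" "N \<le> m" unfolding m_def by simp_all
    have px: "padic2 x" and py: "padic2 y" using x y by (simp_all add: mem_ball2)
    have "x m mod 2^N = c mod 2^N" "y m mod 2^N = c mod 2^N"
      using x y padic2_coherent[OF px \<open>N \<le> m\<close>] padic2_coherent[OF py \<open>N \<le> m\<close>] by (simp_all add: mem_ball2)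
    then obtain j where j: "(fn d m ^^ j) (x m) = y m"
      using fn_orbit_reaches[OF d Q \<open>even c\<close> _ order.refl \<open>2 \<le> N\<close> \<open>N \<le> m\<close>] padic2_range[OF px, of m]
        padic2_range[OF py, of m] \<open>2 \<le> N\<close> by fastforce
    have "((fmap d ^^ j) x) n = ((fmap d ^^ j) x) m mod 2^n"
      using funpow_fmap[OF d px] padic2_coherent \<open>n \<le> m\<close> by blast
    also have "\<dots> = y n" using j funpow_fmap[OF d px, of j m] padic2_coherent[OF py \<open>n \<le> m\<close>] by simp
    finally show "\<exists>j. (fmap d ^^ j) x \<in> ball2 (y n) n"
      using funpow_fmap[OF d px] padic2_mod[OF py] by (auto simp: mem_ball2)
  qed
qed

section \<open>Cycles of type I\<close>

lemma cycle_at_fixed: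
  assumes "0 \<le> b" "b < 2^M" "fn d M b = b"
  shows "cycle_at d M {b}"
proof -
  have "(fn d M ^^ j) b = b" for j by (induction j) (simp_all add: assms(3))
  then show ?thesis using assms(1,2) unfolding cycle_at_def by auto
qed

lemma lifts_singleton:
  assumes "0 \<le> b" "b < 2^m"
  shows "lifts m {b} = {b, b + 2^m}"
proof (rule set_eqI)
  fix y :: int
  show "y \<in> lifts m {b} \<longleftrightarrow> y \<in> {b, b + 2^m}"
  proof
    assume "y \<in> lifts m {b}"
    then have "0 \<le> y" "y < 2^Suc m" "y mod 2^m = b" by (auto simp: lifts_def)
    then show "y \<in> {b, b + 2^m}" using mod_pow2_Suc_cases[of y m] by auto
  qed (use assms in \<open>auto simp: lifts_def\<close>)
qed

lemma cycle_at_orbit: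
  "cycle_at d m C \<Longrightarrow> c \<in> C \<Longrightarrow> C = range (\<lambda>j. (fn d m ^^ j) c)"
  unfolding cycle_at_def by blast

text \<open>Below level \<open>N\<close> every point of the class is fixed, so each fixed point splits.\<close>
lemma splits_of_sqval_on:
  assumes d: "padic2 d" and Q: "sqval_on d a n N" and "n \<le> m" "m < N"
    and C: "cycle_at d m C" "\<forall>y\<in>C. y mod 2^n = a mod 2^n"
  shows "splits d m C"
proof -
  obtain b where b: "b \<in> C" using C(1) unfolding cycle_at_def by blast
  have br: "0 \<le> b" "b < 2^m" and ba: "b mod 2^n = a mod 2^n" using b C unfolding cycle_at_def by auto
  have "(b + 2^m) mod 2^n = b mod 2^n"
    using \<open>n \<le> m\<close> by (simp add: mod_eq_dvd_iff le_imp_power_dvd)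
  then have ba': "(b + 2^m) mod 2^n = a mod 2^n" using ba by simp
  have "fn d m b = b" by (rule fn_fixed_below[OF d Q ba]) (use assms br in simp_all)
  then have "(fn d m ^^ j) b = b" for j by (induction j) simp_all
  then have "C = {b}" using cycle_at_orbit[OF C(1) b] by auto
  have f1: "fn d (Suc m) b = b" by (rule fn_fixed_below[OF d Q ba]) (use assms br in simp_all)
  have f2: "fn d (Suc m) (b + 2^m) = b + 2^m" by (rule fn_fixed_below[OF d Q ba']) (use assms br in simp_all)
  show ?thesis unfolding splits_def \<open>C = {b}\<close>
  proof (intro exI conjI)
    show "cycle_at d (Suc m) {b}" using cycle_at_fixed[OF br(1) _ f1] br by simp
    show "cycle_at d (Suc m) {b + 2^m}" using cycle_at_fixed[OF _ _ f2] br by simp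
  qed (auto simp: lifts_singleton[OF br])
qed

text \<open>From level \<open>N\<close> on, the orbits of \<open>f_m\<close> on the class are the full classes mod \<open>2^N\<close>,
  so every cycle grows.\<close>
lemma grows_of_sqval_on:
  assumes d: "padic2 d" and Q: "sqval_on d a n N" and "even a" "1 \<le> n" "n \<le> N" "2 \<le> N" "N \<le> m"
    and C: "cycle_at d m C" "\<forall>y\<in>C. y mod 2^n = a mod 2^n"
  shows "grows d m C"
  unfolding grows_def cycle_at_def
proof (intro conjI ballI)
  have Crange: "C \<subseteq> {0..<2^m}" using C(1) unfolding cycle_at_def by blast
  have "n \<le> m" using assms by simp
  have in_class: "w mod 2^n = a mod 2^n" if "w \<in> lifts m C" for w
  proof -
    have "(w mod 2^m) mod 2^n = a mod 2^n" using that C(2) by (simp add: lifts_def)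
    then show ?thesis using \<open>n \<le> m\<close> by (simp add: mod_mod_cancel le_imp_power_dvd)
  qed
  show "lifts m C \<subseteq> {0..<2^Suc m}" by (auto simp: lifts_def)
  obtain c where "c \<in> C" using C(1) unfolding cycle_at_def by blast
  then have "c \<in> lifts m C" using Crange by (auto simp: lifts_def)
  then show "lifts m C \<noteq> {}" by blast
  fix b assume b: "b \<in> lifts m C"
  have br: "0 \<le> b" "b < 2^Suc m" "b mod 2^m \<in> C" using b by (auto simp: lifts_def)
  have orb: "C = range (\<lambda>j. (fn d m ^^ j) (b mod 2^m))" by (rule cycle_at_orbit[OF C(1) br(3)])
  show "lifts m C = range (\<lambda>j. (fn d (Suc m) ^^ j) b)"
  proof (rule set_eqI, rule iffI)
    fix y assume y: "y \<in> lifts m C"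
    then have "y mod 2^m \<in> C" by (simp add: lifts_def)
    then obtain i where i: "y mod 2^m = (fn d m ^^ i) (b mod 2^m)" using orb by blast
    have "(fn d m ^^ i) (b mod 2^m) mod 2^N = (b mod 2^m) mod 2^N"
      using in_class[OF b] \<open>n \<le> m\<close> by (intro funpow_fn_mod_fixed[OF d Q \<open>n \<le> N\<close> \<open>N \<le> m\<close>])
        (simp_all add: mod_mod_cancel le_imp_power_dvd)
    then have "b mod 2^N = (y mod 2^m) mod 2^N"
      using i \<open>N \<le> m\<close> by (simp add: mod_mod_cancel le_imp_power_dvd)
    also have "\<dots> = y mod 2^N" using \<open>N \<le> m\<close> by (simp add: mod_mod_cancel le_imp_power_dvd)
    finally have "b mod 2^N = y mod 2^N" .
    moreover have "0 \<le> y" "y < 2^Suc m" using y by (auto simp: lifts_def)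
    ultimately obtain j where "(fn d (Suc m) ^^ j) b = y"
      using fn_orbit_reaches[OF d Q assms(3-6) _ br(1,2) in_class[OF b]] \<open>N \<le> m\<close> by force
    then show "y \<in> range (\<lambda>j. (fn d (Suc m) ^^ j) b)" by (metis rangeI)
  next
    fix y assume "y \<in> range (\<lambda>j. (fn d (Suc m) ^^ j) b)"
    then obtain j where j: "y = (fn d (Suc m) ^^ j) b" by blast
    have "y mod 2^m = (fn d m ^^ j) (b mod 2^m)" unfolding j using br by (intro funpow_fn_mod[OF d]) simp_all
    moreover have "y = (qmap (d (Suc m)) ^^ j) b mod 2^Suc m"
      unfolding j using br by (intro funpow_fn_eq_qmap) simp_all
    then have "0 \<le> y" "y < 2^Suc m" by simp_all
    ultimately show "y \<in> lifts m C" using orb by (auto simp: lifts_def)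
  qed
qed

lemma typeI_of_sqval_on:
  assumes d: "padic2 d" and "even a" "1 \<le> n" "n \<le> N" "2 \<le> N" and Q: "sqval_on d a n N"
  shows "typeI d a n (N - n)"
  unfolding typeI_def split_then_grow_def
proof (intro conjI allI impI)
  show "fn d n (a mod 2^n) = a mod 2^n" by (rule fn_fixed_below[OF d Q]) (simp_all add: assms)
  fix m C
  assume "n \<le> m \<and> m < n + (N - n) \<and> cycle_at d m C \<and> (\<forall>y\<in>C. y mod 2^n \<in> {a mod 2^n})"
  then show "splits d m C" by (intro splits_of_sqval_on[OF d Q]) auto
next
  fix m C
  assume "n + (N - n) \<le> m \<and> cycle_at d m C \<and> (\<forall>y\<in>C. y mod 2^n \<in> {a mod 2^n})"
  then show "grows d m C" using assms by (intro grows_of_sqval_on[OF d Q]) auto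
qed

section \<open>Partitions into maximal balls\<close>

lemma ball2_subset:
  assumes "n \<le> N" "c' mod 2^n = c mod 2^n"
  shows "ball2 c' N \<subseteq> ball2 c n"
proof
  fix x assume "x \<in> ball2 c' N"
  then have x: "padic2 x" "x N = c' mod 2^N" by (simp_all add: mem_ball2)
  have "x n = (c' mod 2^N) mod 2^n" using padic2_coherent[OF x(1) assms(1)] x(2) by simp
  also have "\<dots> = c mod 2^n" using assms by (simp add: mod_mod_cancel le_imp_power_dvd)
  finally show "x \<in> ball2 c n" using x(1) by (simp add: mem_ball2)
qed

text \<open>Balls are nested or disjoint, so a set covered by good balls of bounded level is the disjoint
  union of the maximal good balls it contains: those of least level around each of its points.\<close>
lemma finite_partition_into_balls:
  fixes P :: "nat \<Rightarrow> int \<Rightarrow> bool"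
  assumes cover: "\<And>x. x \<in> X \<Longrightarrow> padic2 x \<and> (\<exists>N\<le>B. P N (x N))"
    and inside: "\<And>x N. x \<in> X \<Longrightarrow> P N (x N) \<Longrightarrow> ball2 (x N) N \<subseteq> X"
  shows "\<exists>\<E>. finite \<E> \<and> pairwise disjnt \<E> \<and> \<Union>\<E> = X \<and> (\<forall>E\<in>\<E>. \<exists>c N. P N c \<and> E = ball2 c N)"
proof -
  define lev where "lev x = (LEAST N. P N (x N))" for x :: "nat \<Rightarrow> int"
  define bl where "bl x = ball2 (x (lev x)) (lev x)" for x
  have lev: "P (lev x) (x (lev x)) \<and> lev x \<le> B" if "x \<in> X" for x
    using cover[OF that] LeastI_ex[of "\<lambda>N. P N (x N)"] Least_le[of "\<lambda>N. P N (x N)"]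
    unfolding lev_def by (meson order.trans)
  have lev_min: "lev x \<le> N" if "P N (x N)" for x N
    unfolding lev_def by (rule Least_le) (rule that)
  have same: "bl x = bl x'" if "x \<in> X" "x' \<in> X" "lev x \<le> lev x'" "\<not> disjnt (bl x) (bl x')" for x x'
  proof -
    have "x' (lev x') mod 2^lev x = x (lev x) mod 2^lev x"
      using disjnt_ball2[OF that(3)] that(4) unfolding bl_def by blast
    then have "x' (lev x) = x (lev x)"
      using padic2_coherent[OF _ that(3)] padic2_mod cover that(1,2) by metis
    then have "lev x' = lev x" using lev_min[of "lev x" x'] lev that by force
    then show ?thesis unfolding bl_def using \<open>x' (lev x) = x (lev x)\<close> by simp
  qed
  show ?thesis
  proof (intro exI conjI)
    have "bl ` X \<subseteq> (\<lambda>(c, N). ball2 c N) ` ({0..<2^B} \<times> {..B})"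
    proof
      fix E assume "E \<in> bl ` X"
      then obtain x where x: "x \<in> X" "E = bl x" by blast
      have "(2::int)^lev x \<le> 2^B" using lev[OF x(1)] by (simp add: power_increasing)
      moreover have "0 \<le> x (lev x)" "x (lev x) < 2^lev x" using padic2_range cover[OF x(1)] by auto
      ultimately have "x (lev x) < 2^B" by linarith
      then have "(x (lev x), lev x) \<in> {0..<2^B} \<times> {..B}" using lev[OF x(1)] \<open>0 \<le> x (lev x)\<close> by auto
      then show "E \<in> (\<lambda>(c, N). ball2 c N) ` ({0..<2^B} \<times> {..B})" unfolding x(2) bl_def by force
    qed
    then show "finite (bl ` X)" by (rule finite_subset) simp
    show "pairwise disjnt (bl ` X)"
      unfolding pairwise_def using same by (metis disjnt_sym image_iff nat_le_linear)
    have "x \<in> bl x" if "x \<in> X" for x using cover[OF that] padic2_mod by (simp add: bl_def mem_ball2)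
    then show "\<Union>(bl ` X) = X" using inside lev unfolding bl_def by blast
    show "\<forall>E\<in>bl ` X. \<exists>c N. P N c \<and> E = ball2 c N" using lev unfolding bl_def by blast
  qed
qed

lemma partition_into_minimal_components:
  assumes d: "padic2 d"
    and cover: "\<And>x. x \<in> ball2 0 1 \<Longrightarrow> \<exists>a n N. x \<in> ball2 a n \<and> n \<le> N \<and> 2 \<le> N \<and> N \<le> B \<and> sqval_on d a n N"
  shows "\<exists>\<E>. finite \<E> \<and> (\<forall>E\<in>\<E>. minimal_component d E) \<and> pairwise disjnt \<E> \<and> \<Union>\<E> = ball2 0 1"
proof -
  define P where "P N c \<longleftrightarrow> 2 \<le> N \<and> even c \<and> sqval_on d c N N" for N c
  have "\<exists>\<E>. finite \<E> \<and> pairwise disjnt \<E> \<and> \<Union>\<E> = ball2 0 1 \<and> (\<forall>E\<in>\<E>. \<exists>c N. P N c \<and> E = ball2 c N)"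
  proof (rule finite_partition_into_balls)
    fix x assume x: "x \<in> ball2 0 1"
    then obtain a n N where a: "x \<in> ball2 a n" "n \<le> N" "2 \<le> N" "N \<le> B" "sqval_on d a n N"
      using cover by blast
    have px: "padic2 x" using x by (simp add: mem_ball2)
    have "x N mod 2 = x 1" using padic2_coherent[OF px, of 1 N] a(3) by simp
    then have "even (x N)" using x by (simp add: mem_ball2 even_iff_mod_2_eq_zero)
    moreover have "sqval_on d (x N) N N"
      using a padic2_coherent[OF px a(2)] by (intro sqval_on_subclass[OF a(5) a(2)]) (simp add: mem_ball2)
    ultimately show "padic2 x \<and> (\<exists>N\<le>B. P N (x N))" using px a unfolding P_def by blast
  next
    fix x N assume "x \<in> ball2 0 1" "P N (x N)"
    then show "ball2 (x N) N \<subseteq> ball2 0 1"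
      unfolding P_def by (intro ball2_subset) (auto simp: even_iff_mod_2_eq_zero)
  qed
  then show ?thesis using minimal_component_ball[OF d] unfolding P_def by metis
qed

section \<open>Hensel lifting of square roots\<close>

lemma square_lift_step:
  fixes r D :: int
  assumes r: "r mod 2^Suc h = 2^h" and K: "2^K dvd r^2 - D" "2*h + 3 \<le> K"
    and not_lifted: "\<not> 2^Suc K dvd r^2 - D"
  shows "2^Suc K dvd (r + 2^(K - Suc h))^2 - D"
proof -
  obtain q where q: "r = 2^h * (2*q + 1)" using r by (rule pow2_times_odd)
  obtain t where t: "r^2 - D = 2^K * t" using K(1) by (rule dvdE)
  have "odd t" using not_lifted t by (auto elim!: evenE)
  then obtain s where s: "t = 2*s + 1" by (rule oddE)
  define e where "e = K - Suc h"
  have K_eq: "K = Suc h + e" and e: "Suc K \<le> 2*e" using K(2) unfolding e_def by simp_all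
  have sq: "(2::int)^(2*e) = 2^e * 2^e" by (simp add: mult_2 power_add)
  have "(r + 2^e)^2 - D = 2^K * (t + 2*q + 1) + 2^(2*e)"
    using t q unfolding K_eq sq by (simp add: power2_eq_square power_add algebra_simps)
  also have "(2::int)^(2*e) = 2^Suc K * 2^(2*e - Suc K)"
    by (subst power_add[symmetric]) (use e in simp)
  also have "2^K * (t + 2*q + 1) + 2^Suc K * 2^(2*e - Suc K) = 2^Suc K * (s + q + 1 + 2^(2*e - Suc K))"
    unfolding s by (simp add: algebra_simps)
  finally show ?thesis unfolding e_def by simp
qed

text \<open>Hensel lifting of the square root \<open>2^h\<close> of \<open>d\<close> modulo \<open>2^(2h+3)\<close>.\<close>
fun sqrt_approx :: "(nat \<Rightarrow> int) \<Rightarrow> nat \<Rightarrow> nat \<Rightarrow> int" where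
  "sqrt_approx d h 0 = 2^h"
| "sqrt_approx d h (Suc j) =
    (if 2^(2*h+j+4) dvd (sqrt_approx d h j)^2 - d (2*h+j+4) then sqrt_approx d h j
     else sqrt_approx d h j + 2^(h+j+2))"

lemma sqrt_approx_invariant:
  assumes d: "padic2 d" and d3: "d (2*h+3) = 2^(2*h)"
  shows "sqrt_approx d h j mod 2^Suc h = 2^h \<and> 2^(2*h+j+3) dvd (sqrt_approx d h j)^2 - d (2*h+j+3)"
proof (induction j)
  case 0
  have "((2::int)^h)^2 = 2^(2*h)" by (simp only: mult.commute[of 2 h] power_mult)
  then show ?case using d3 by simp
next
  case (Suc j)
  define r where "r = sqrt_approx d h j"
  define K where "K = 2*h+j+3"
  have r: "r mod 2^Suc h = 2^h" and rK: "2^K dvd r^2 - d K" using Suc unfolding r_def K_def by auto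
  have "d (Suc K) mod 2^K = d K mod 2^K"
    using padic2_coherent[OF d, of K "Suc K"] padic2_mod[OF d, of K] by simp
  then have "2^K dvd d (Suc K) - d K" by (simp add: mod_eq_dvd_iff)
  with rK have "2^K dvd (r^2 - d K) - (d (Suc K) - d K)" by (rule dvd_diff)
  then have K: "2^K dvd r^2 - d (Suc K)" by simp
  have "2*h + j + 4 = Suc K" "h + j + 2 = K - Suc h" unfolding K_def by simp_all
  then have step: "sqrt_approx d h (Suc j) =
      (if 2^Suc K dvd r^2 - d (Suc K) then r else r + 2^(K - Suc h))"
    unfolding r_def by (simp only: sqrt_approx.simps)
  have "(2::int)^Suc h dvd 2^(K - Suc h)" unfolding K_def by (intro le_imp_power_dvd) simp
  then obtain k :: int where "2^(K - Suc h) = 2^Suc h * k" by (rule dvdE)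
  then have "(r + 2^(K - Suc h)) mod 2^Suc h = 2^h" using r by simp
  moreover have "2^Suc K dvd (r + 2^(K - Suc h))^2 - d (Suc K)"
    if "\<not> 2^Suc K dvd r^2 - d (Suc K)"
    using square_lift_step[OF r K _ that] unfolding K_def by simp
  ultimately show ?case using r unfolding step by (simp add: K_def)
qed

lemma sqrt_approx_Suc_mod: "sqrt_approx d h (Suc j) mod 2^j = sqrt_approx d h j mod 2^j"
proof -
  have "(2::int)^j dvd 2^(h+j+2)" by (intro le_imp_power_dvd) simp
  then show ?thesis by (auto simp: mod_eq_dvd_iff)
qed

lemma square_root_of_residue:
  assumes d: "padic2 d" and d3: "d (2*h+3) = 2^(2*h)"
  shows "\<exists>y. padic2 y \<and> z2_mult y y = d"
proof (intro exI conjI)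
  define y where "y n = sqrt_approx d h n mod 2^n" for n
  show "padic2 y"
  proof (rule padic2I)
    fix n
    show "0 \<le> y n" "y n < 2^n" unfolding y_def by simp_all
    show "y n = y (Suc n) mod 2^n"
      unfolding y_def using sqrt_approx_Suc_mod[of d h n] by (simp add: mod_mod_cancel)
  qed
  show "z2_mult y y = d"
  proof
    fix n
    have "2^(2*h+n+3) dvd (sqrt_approx d h n)^2 - d (2*h+n+3)"
      using sqrt_approx_invariant[OF d d3] by blast
    then have "(2::int)^n dvd (sqrt_approx d h n)^2 - d (2*h+n+3)"
      by (rule dvd_trans[rotated]) (intro le_imp_power_dvd, simp)
    then have "(sqrt_approx d h n)^2 mod 2^n = d n"
      using padic2_coherent[OF d, of n "2*h+n+3"] by (simp add: mod_eq_dvd_iff)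
    then show "z2_mult y y n = d n" unfolding z2_mult_def y_def
      by (simp add: power2_eq_square mod_mult_left_eq mod_mult_right_eq)
  qed
qed

section \<open>Valuations of \<open>y\<^sup>2 - d\<close> on the covering balls\<close>

lemma sqval_on_odd_multiple:
  assumes "d (Suc (2*p)) = 0"
  shows "sqval_on d (2^p) (Suc p) (2*p)"
  unfolding sqval_on_def sqval_exact_def
proof (intro allI impI)
  fix y :: int assume "y mod 2^Suc p = 2^p mod 2^Suc p"
  then have "y mod 2^Suc p = 2^p" by simp
  then obtain q where y: "y = 2^p * (2*q + 1)" by (rule pow2_times_odd)
  define P where "P = (2::int)^p"
  have "P > 0" unfolding P_def by simp
  have P: "(2::int)^(2*p) = P * P" "(2::int)^Suc (2*p) = 2 * (P * P)"
    unfolding P_def by (simp_all only: power_Suc mult_2 power_add numeral_3_eq_3 mult.assoc)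
  have "y^2 - d (Suc (2*p)) - P * P = 2 * (P * P) * (2 * (q*q + q))"
    using assms unfolding y P_def[symmetric] by (simp add: power2_eq_square algebra_simps)
  moreover have "0 \<le> P * P" "P * P < 2 * (P * P)" using \<open>P > 0\<close> by simp_all
  ultimately show "(y^2 - d (Suc (2*p))) mod 2^Suc (2*p) = 2^(2*p)"
    unfolding P by (subst mod_eq_iff_dvd_diff) simp_all
qed

lemma sqval_on_zero_class:
  assumes "d (Suc v) = 2^v" "Suc v \<le> 2*n"
  shows "sqval_on d 0 n v"
  unfolding sqval_on_def sqval_exact_def
proof (intro allI impI)
  fix y :: int assume "y mod 2^n = 0 mod 2^n"
  then obtain q where "y = 2^n * q" by (auto simp: mod_eq_0_iff_dvd elim!: dvdE)
  then have "y^2 = 2^(2*n) * q^2" by (simp add: power_mult_distrib power_mult mult.commute)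
  moreover have "(2::int)^Suc v dvd 2^(2*n)" using assms(2) by (rule le_imp_power_dvd)
  ultimately have "2^Suc v dvd y^2 - d (Suc v) - 2^v" using assms(1) by simp
  then show "(y^2 - d (Suc v)) mod 2^Suc v = 2^v" by (subst mod_eq_iff_dvd_diff) simp_all
qed

lemma sqval_on_odd_class_even_exponent:
  assumes v: "v = 2*h" and w: "Suc v \<le> w" "w \<le> v + 2"
    and dw: "(d (Suc w) - 2^v) mod 2^Suc w = 2^w"
  shows "sqval_on d (2^h) (Suc h) w"
  unfolding sqval_on_def sqval_exact_def
proof (intro allI impI)
  fix y :: int assume "y mod 2^Suc h = 2^h mod 2^Suc h"
  then have "y mod 2^Suc h = 2^h" by simp
  then obtain q where y: "y = 2^h * (2*q + 1)" by (rule pow2_times_odd)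
  have "even (q*q + q)" by simp
  then obtain s where s: "q*q + q = 2*s" by (rule evenE)
  define P where "P = (2::int)^h"
  have P: "(2::int)^v = P * P" unfolding P_def v by (simp only: mult_2 power_add)
  then have P3: "(2::int)^(v+3) = 8 * (P * P)" by (simp add: power_add)
  have "y^2 = P * P + 4 * (P * P) * (q*q + q)" unfolding y P_def[symmetric]
    by (simp add: power2_eq_square algebra_simps)
  then have y2: "y^2 = P * P + 8 * (P * P) * s" unfolding s by simp
  have "(2::int)^Suc w dvd 2^(v+3)" using w(2) by (intro le_imp_power_dvd) simp
  then have "2^Suc w dvd 2^(v+3) * s" by (rule dvd_mult2)
  moreover have "2^Suc w dvd d (Suc w) - 2^v - 2^w" using dw by (subst (asm) mod_eq_iff_dvd_diff) simp_all
  ultimately have "2^Suc w dvd (2^(v+3) * s - (d (Suc w) - 2^v - 2^w) - 2^Suc w)"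
    by (rule dvd_diff[OF dvd_diff dvd_refl])
  moreover have "y^2 - d (Suc w) - 2^w = 2^(v+3) * s - (d (Suc w) - 2^v - 2^w) - 2^Suc w"
    using y2 unfolding P P3 by simp
  ultimately have "2^Suc w dvd y^2 - d (Suc w) - 2^w" by (simp only:)
  then show "(y^2 - d (Suc w)) mod 2^Suc w = 2^w" by (subst mod_eq_iff_dvd_diff) simp_all
qed

lemma padic2_v2:
  assumes x: "padic2 x" and "x n \<noteq> 0"
  shows "(\<forall>i\<le>v2 x. x i = 0) \<and> x (Suc (v2 x)) = 2^v2 x"
proof -
  have "x 0 = 0" using padic2_range[OF x, of 0] by simp
  then obtain m where "x (Suc m) \<noteq> 0" using \<open>x n \<noteq> 0\<close> by (cases n) auto
  then have nz: "x (Suc (v2 x)) \<noteq> 0" unfolding v2_def by (rule LeastI)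
  have zero: "x i = 0" if "i \<le> v2 x" for i
  proof (cases i)
    case (Suc i')
    then have "i' < v2 x" using that by simp
    then show ?thesis using not_less_Least[of i' "\<lambda>m. x (Suc m) \<noteq> 0"] Suc unfolding v2_def by blast
  qed (simp add: \<open>x 0 = 0\<close>)
  then show ?thesis using padic2_Suc_cases[OF x, of "v2 x"] nz by auto
qed

lemma z2_sub_of_int_apply: "z2_sub d (z2_of_int c) n = (d n - c) mod 2^n"
  by (simp add: z2_sub_def z2_of_int_def mod_diff_right_eq)

lemma padic2_z2_sub_of_int:
  assumes d: "padic2 d"
  shows "padic2 (z2_sub d (z2_of_int c))"
proof (rule padic2I)
  fix n
  show "0 \<le> z2_sub d (z2_of_int c) n" "z2_sub d (z2_of_int c) n < 2^n"
    by (simp_all add: z2_sub_of_int_apply)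
  have "d n mod 2^n = d (Suc n) mod 2^n" using padic2_coherent[OF d, of n "Suc n"] by simp
  then have "(d n - c) mod 2^n = (d (Suc n) - c) mod 2^n" by (rule mod_diff_cong) simp
  then show "z2_sub d (z2_of_int c) n = z2_sub d (z2_of_int c) (Suc n) mod 2^n"
    by (simp add: z2_sub_of_int_apply mod_mod_cancel)
qed

lemma v2_diff_pow2:
  assumes d: "padic2 d" and dv: "\<forall>i\<le>v. d i = 0" "d (Suc v) = 2^v" and d3: "d (v+3) \<noteq> 2^v"
    and w: "w = v2 (z2_sub d (z2_of_int (2^v)))"
  shows "Suc v \<le> w \<and> w \<le> v + 2 \<and> (d (Suc w) - 2^v) mod 2^Suc w = 2^w"
proof -
  define e where "e = z2_sub d (z2_of_int (2^v))"
  have e: "e n = (d n - 2^v) mod 2^n" for n unfolding e_def by (rule z2_sub_of_int_apply)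
  have "e (v+3) \<noteq> 0"
  proof
    assume "e (v+3) = 0"
    then have "2^(v+3) dvd d (v+3) - 2^v" unfolding e by (simp add: mod_eq_0_iff_dvd)
    then have "d (v+3) mod 2^(v+3) = 2^v" by (subst mod_eq_iff_dvd_diff) simp_all
    then show False using d3 padic2_mod[OF d] by simp
  qed
  moreover have "padic2 e" unfolding e_def by (rule padic2_z2_sub_of_int[OF d])
  moreover have "w = v2 e" using w unfolding e_def .
  ultimately have we: "(\<forall>i\<le>w. e i = 0) \<and> e (Suc w) = 2^w" using padic2_v2 by blast
  have "e i = 0" if "i \<le> Suc v" for i
  proof -
    have "d i = 2^v mod 2^i" using padic2_coherent[OF d that] dv(2) by simp
    then show ?thesis unfolding e by (simp add: mod_diff_left_eq)
  qed
  then have "Suc v \<le> w" using we by (cases "Suc w \<le> Suc v") auto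
  moreover have "w \<le> v + 2" using we \<open>e (v+3) \<noteq> 0\<close> by (cases "v + 3 \<le> w") auto
  ultimately show ?thesis using we e by simp
qed

lemma ball2_zero_decomp:
  assumes "1 \<le> n0"
  shows "ball2 0 1 = (\<Union>n\<in>{2..n0}. ball2 (2^(n-1)) n) \<union> ball2 0 n0"
  using assms
proof (induction n0 rule: dec_induct)
  case (step n)
  have "{2..Suc n} = insert (Suc n) {2..n}" using step.hyps by auto
  then show ?case using step.IH ball2_split[of 0 n, unfolded Suc_eq_plus1[symmetric]] by auto
qed simp

lemma pow2_pred_mod: "1 \<le> n \<Longrightarrow> (2::int)^(n-1) mod 2^n = 2^(n-1)"
  by (cases n) simp_all

lemma disjnt_ball2_pow2:
  assumes "1 \<le> n" "1 \<le> m" "n \<noteq> m"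
  shows "disjnt (ball2 (2^(n-1)) n) (ball2 (2^(m-1)) m)"
proof -
  have *: "disjnt (ball2 (2^(k-1)) k) (ball2 (2^(l-1)) l)" if "1 \<le> k" "k < l" for k l
  proof (rule disjnt_ball2)
    have "(2::int)^(l-1) mod 2^k = 0" using that by (simp add: le_imp_power_dvd)
    then show "(2::int)^(l-1) mod 2^k \<noteq> 2^(k-1) mod 2^k" using pow2_pred_mod[OF that(1)] by simp
  qed (use that in simp)
  show ?thesis using assms *[of n m] *[of m n] disjnt_sym by (cases "n < m") auto
qed

lemma disjnt_ball2_pow2_zero: "1 \<le> n \<Longrightarrow> n \<le> m \<Longrightarrow> disjnt (ball2 (2^(n-1)) n) (ball2 0 m)"
  by (rule disjnt_ball2) (simp_all add: pow2_pred_mod)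

lemma fmap_odd_ball:
  assumes d: "padic2 d" "d 1 = 0"
  shows "fmap d ` ball2 1 1 \<subseteq> ball2 0 1"
proof
  fix z assume "z \<in> fmap d ` ball2 1 1"
  then obtain x where x: "padic2 x" "x 1 = 1" "z = fmap d x" by (auto simp: mem_ball2)
  have "fmap d x 1 = 0" using x d by (simp add: fmap_apply fn_def)
  then show "z \<in> ball2 0 1" using x padic2_fmap[OF d(1) x(1)] by (simp add: mem_ball2)
qed

lemma nat_half_bound_cases:
  "2 \<le> n \<Longrightarrow> n \<le> v div 2 + 1 \<Longrightarrow> v < 2*n - 1 \<Longrightarrow> even v \<and> n = v div 2 + 1" for v :: nat
  unfolding even_iff_mod_2_eq_zero by presburger

locale nonsquare_multiple_of_4 =
  fixes d :: "nat \<Rightarrow> int"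
  assumes padic: "padic2 d" and d_2: "d 2 = 0" and nonsquare: "\<not> (\<exists>y. padic2 y \<and> z2_mult y y = d)"
begin

abbreviation v :: nat where "v \<equiv> v2 d"

abbreviation w :: nat where "w \<equiv> v2 (z2_sub d (z2_of_int (2^v)))"

lemma d_1: "d 1 = 0"
  using padic2_coherent[OF padic, of 1 2] d_2 by simp

lemma d_valuation: "(\<forall>i\<le>v. d i = 0) \<and> d (Suc v) = 2^v"
proof -
  have "\<exists>n. d n \<noteq> 0"
  proof (rule ccontr)
    assume "\<not> (\<exists>n. d n \<noteq> 0)"
    then have "z2_mult (z2_of_int 0) (z2_of_int 0) = d" by (auto simp: z2_mult_def z2_of_int_def)
    then show False using nonsquare padic2_z2_of_int by blast
  qed
  then show ?thesis using padic2_v2[OF padic] by blast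
qed

lemma v_ge_2: "2 \<le> v"
proof (rule ccontr)
  assume "\<not> 2 \<le> v"
  then have "d (Suc v) = d 2 mod 2^Suc v" by (intro padic2_coherent[OF padic]) simp
  then show False using d_valuation d_2 by simp
qed

lemma w_bounds:
  assumes "even v"
  shows "Suc v \<le> w \<and> w \<le> v + 2 \<and> (d (Suc w) - 2^v) mod 2^Suc w = 2^w"
proof (rule v2_diff_pow2[OF padic _ _ _ refl])
  obtain h where h: "v = 2*h" using assms by (rule evenE)
  show "d (v+3) \<noteq> 2^v"
  proof
    assume "d (v+3) = 2^v"
    then have "d (2*h+3) = 2^(2*h)" using h by simp
    then show False using square_root_of_residue[OF padic] nonsquare by blast
  qed
qed (use d_valuation in auto)

lemma sqval_zero: "sqval_on d 0 (v div 2 + 1) v"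
  using d_valuation by (intro sqval_on_zero_class) auto

lemma sqval_pow2:
  assumes "2 \<le> n" "2*n - 1 \<le> v"
  shows "sqval_on d (2^(n-1)) n (2*n - 2)"
proof -
  have "d (Suc (2*(n-1))) = 0" using d_valuation assms by simp
  then have "sqval_on d (2^(n-1)) (Suc (n-1)) (2*(n-1))" by (rule sqval_on_odd_multiple)
  moreover have "Suc (n-1) = n" "2*(n-1) = 2*n - 2" using assms by simp_all
  ultimately show ?thesis by simp
qed

lemma sqval_top:
  assumes "even v"
  shows "sqval_on d (2^(v div 2)) (v div 2 + 1) w"
  using sqval_on_odd_class_even_exponent[of v "v div 2" w d] w_bounds assms by simp

lemma typeI_pow2: "2 \<le> n \<Longrightarrow> 2*n - 1 \<le> v \<Longrightarrow> typeI d (2^(n-1)) n (n - 2)"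
  using typeI_of_sqval_on[OF padic _ _ _ _ sqval_pow2, of n] by simp

lemma typeI_zero: "typeI d 0 (v div 2 + 1) (v - (v div 2 + 1))"
  using typeI_of_sqval_on[OF padic _ _ _ _ sqval_zero] v_ge_2 by simp

lemma typeI_top:
  assumes "even v"
  shows "typeI d (2^(v div 2)) (v div 2 + 1) (w - (v div 2 + 1))"
proof -
  have "v div 2 + 1 \<le> w" "2 \<le> w" using w_bounds[OF assms] div_le_dividend[of v 2] v_ge_2 by linarith+
  then show ?thesis using typeI_of_sqval_on[OF padic _ _ _ _ sqval_top[OF assms]] v_ge_2 by simp
qed

lemma sqval_cover:
  assumes "x \<in> ball2 0 1"
  shows "\<exists>a n N. x \<in> ball2 a n \<and> n \<le> N \<and> 2 \<le> N \<and> N \<le> v + 2 \<and> sqval_on d a n N"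
proof -
  define n0 where "n0 = v div 2 + 1"
  have "x \<in> (\<Union>n\<in>{2..n0}. ball2 (2^(n-1)) n) \<union> ball2 0 n0"
    using ball2_zero_decomp[of n0] assms unfolding n0_def by simp
  then consider "x \<in> ball2 0 n0" | n where "n \<in> {2..n0}" "x \<in> ball2 (2^(n-1)) n" by blast
  then show ?thesis
  proof cases
    case 1
    moreover have "n0 \<le> v" unfolding n0_def using v_ge_2 by linarith
    ultimately show ?thesis using sqval_zero v_ge_2 unfolding n0_def[symmetric]
      by (intro exI[of _ 0] exI[of _ n0] exI[of _ v]) simp
  next
    case (2 n)
    show ?thesis
    proof (cases "2*n - 1 \<le> v")
      case True
      then show ?thesis using 2 sqval_pow2[of n]
        by (intro exI[of _ "2^(n-1)"] exI[of _ n] exI[of _ "2*n - 2"]) auto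
    next
      case False
      moreover have "2 \<le> n" "n \<le> v div 2 + 1" using 2(1) unfolding n0_def by simp_all
      ultimately have "even v \<and> n = n0" unfolding n0_def by (intro nat_half_bound_cases) simp_all
      then have "even v" "n = n0" by simp_all
      moreover have "n0 \<le> w" "2 \<le> w" "w \<le> v + 2"
        using w_bounds[OF \<open>even v\<close>] v_ge_2 div_le_dividend[of v 2] unfolding n0_def by linarith+
      ultimately show ?thesis using 2(2) sqval_top[OF \<open>even v\<close>] unfolding n0_def
        by (intro exI[of _ "2^(v div 2)"] exI[of _ "v div 2 + 1"] exI[of _ w]) simp
    qed
  qed
qed

lemma minimal_partition: "\<exists>\<E>. finite \<E> \<and> (\<forall>E\<in>\<E>. minimal_component d E) \<and> pairwise disjnt \<E> \<and> \<Union>\<E> = ball2 0 1"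
  using partition_into_minimal_components[OF padic sqval_cover] .


lemma minimal_component_zero_ball:
  assumes "v = 2"
  shows "minimal_component d (ball2 0 2)"
proof -
  have n0: "v div 2 + 1 = 2" using assms by simp
  have "sqval_on d 0 2 2" using sqval_zero unfolding n0 unfolding assms .
  show ?thesis by (rule minimal_component_ball[OF padic _ _ \<open>sqval_on d 0 2 2\<close>]) simp_all
qed

lemma minimal_component_top_ball:
  assumes "v = 2" "c mod 4 = 2"
  shows "minimal_component d (ball2 c w)"
proof -
  have "even v" using assms(1) by simp
  have "v div 2 + 1 = 2" "(2::int)^(v div 2) = 2" using assms(1) by simp_all
  then have "sqval_on d 2 2 w" using sqval_top[OF \<open>even v\<close>] by (simp only:)
  moreover have "2 \<le> w" using w_bounds[OF \<open>even v\<close>] assms(1) by simp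
  ultimately have "sqval_on d c w w" by (rule sqval_on_subclass) (use assms(2) in simp)
  moreover have "even c" using assms(2) mod_mod_cancel[of 2 4 c] by (simp add: even_iff_mod_2_eq_zero)
  ultimately show ?thesis using minimal_component_ball[OF padic] \<open>2 \<le> w\<close> by blast
qed

lemma case_v_2_w_3:
  "v = 2 \<and> v2 (z2_sub d (z2_of_int 4)) = 3 \<longrightarrow>
         minimal_component d (ball2 0 2) \<and> minimal_component d (ball2 2 3)
       \<and> minimal_component d (ball2 6 3)
       \<and> pairwise disjnt {ball2 0 2, ball2 2 3, ball2 6 3}
       \<and> ball2 0 1 = ball2 0 2 \<union> ball2 2 3 \<union> ball2 6 3"
proof (intro impI conjI)
  assume "v = 2 \<and> v2 (z2_sub d (z2_of_int 4)) = 3"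
  then have v: "v = 2" and w: "w = 3" by simp_all
  show "minimal_component d (ball2 0 2)" by (rule minimal_component_zero_ball[OF v])
  show "minimal_component d (ball2 2 3)" "minimal_component d (ball2 6 3)"
    using minimal_component_top_ball[OF v] w by simp_all
  show "pairwise disjnt {ball2 0 2, ball2 2 3, ball2 6 3}"
    by (auto simp: pairwise_insert intro: disjnt_ball2 disjnt_ball2[THEN disjnt_sym])
  show "ball2 0 1 = ball2 0 2 \<union> ball2 2 3 \<union> ball2 6 3"
    using ball2_split[of 0 1, unfolded one_add_one] ball2_split[of 2 2] by (simp add: Un_assoc)
qed

lemma case_v_2_w_4:
  "v = 2 \<and> v2 (z2_sub d (z2_of_int 4)) = 4 \<longrightarrow>
         minimal_component d (ball2 0 2) \<and> minimal_component d (ball2 2 4)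
       \<and> minimal_component d (ball2 6 4) \<and> minimal_component d (ball2 10 4)
       \<and> minimal_component d (ball2 14 4)
       \<and> pairwise disjnt {ball2 0 2, ball2 2 4, ball2 6 4, ball2 10 4, ball2 14 4}
       \<and> ball2 0 1 = ball2 0 2 \<union> ball2 2 4 \<union> ball2 6 4 \<union> ball2 10 4 \<union> ball2 14 4"
proof (intro impI conjI)
  assume "v = 2 \<and> v2 (z2_sub d (z2_of_int 4)) = 4"
  then have v: "v = 2" and w: "w = 4" by simp_all
  show "minimal_component d (ball2 0 2)" by (rule minimal_component_zero_ball[OF v])
  show "minimal_component d (ball2 2 4)" "minimal_component d (ball2 6 4)"
    "minimal_component d (ball2 10 4)" "minimal_component d (ball2 14 4)"
    using minimal_component_top_ball[OF v] w by simp_all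
  show "pairwise disjnt {ball2 0 2, ball2 2 4, ball2 6 4, ball2 10 4, ball2 14 4}"
    by (auto simp: pairwise_insert intro: disjnt_ball2 disjnt_ball2[THEN disjnt_sym])
  show "ball2 0 1 = ball2 0 2 \<union> ball2 2 4 \<union> ball2 6 4 \<union> ball2 10 4 \<union> ball2 14 4"
    using ball2_split[of 0 1, unfolded one_add_one] ball2_split[of 2 2]
      ball2_split[of 2 3] ball2_split[of 6 3] by auto
qed


lemma case_v_odd:
  assumes n0: "n0 = v div 2 + 1"
  shows "v \<ge> 3 \<and> odd v \<longrightarrow>
          ball2 0 1 = (\<Union>n\<in>{2..n0}. ball2 (2 ^ (n - 1)) n) \<union> ball2 0 n0
        \<and> (\<forall>n\<in>{2..n0}. \<forall>m\<in>{2..n0}. n \<noteq> m \<longrightarrow> disjnt (ball2 (2 ^ (n - 1)) n) (ball2 (2 ^ (m - 1)) m))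
        \<and> (\<forall>n\<in>{2..n0}. disjnt (ball2 (2 ^ (n - 1)) n) (ball2 0 n0))
        \<and> (\<forall>n\<in>{2..n0}. typeI d (2 ^ (n - 1)) n (n - 2))
        \<and> typeI d 0 n0 (n0 - 1)"
proof (intro impI conjI ballI)
  assume "v \<ge> 3 \<and> odd v"
  then have v: "v = 2 * (n0 - 1) + 1" unfolding n0 by (auto elim: oddE)
  show "ball2 0 1 = (\<Union>n\<in>{2..n0}. ball2 (2 ^ (n - 1)) n) \<union> ball2 0 n0"
    using ball2_zero_decomp n0 by simp
  show "disjnt (ball2 (2 ^ (n - 1)) n) (ball2 (2 ^ (m - 1)) m)" if "n \<in> {2..n0}" "m \<in> {2..n0}" "n \<noteq> m" for n m
    using that by (intro disjnt_ball2_pow2) simp_all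
  show "disjnt (ball2 (2 ^ (n - 1)) n) (ball2 0 n0)" if "n \<in> {2..n0}" for n
    using that by (intro disjnt_ball2_pow2_zero) simp_all
  show "typeI d (2 ^ (n - 1)) n (n - 2)" if "n \<in> {2..n0}" for n
  proof (rule typeI_pow2)
    show "2 \<le> n" "2*n - 1 \<le> v" using that v by auto
  qed
  have "v - n0 = n0 - 1" using v n0 by arith
  then show "typeI d 0 n0 (n0 - 1)" using typeI_zero unfolding n0[symmetric] by simp
qed

lemma case_v_even:
  assumes n0: "n0 = v div 2 + 1"
  shows "v \<ge> 3 \<and> even v \<longrightarrow>
          ball2 0 1 = (\<Union>n\<in>{2..n0 - 1}. ball2 (2 ^ (n - 1)) n) \<union> ball2 0 n0 \<union> ball2 (2 ^ (n0 - 1)) n0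
        \<and> (\<forall>n\<in>{2..n0 - 1}. \<forall>m\<in>{2..n0 - 1}. n \<noteq> m \<longrightarrow> disjnt (ball2 (2 ^ (n - 1)) n) (ball2 (2 ^ (m - 1)) m))
        \<and> (\<forall>n\<in>{2..n0 - 1}. disjnt (ball2 (2 ^ (n - 1)) n) (ball2 0 n0)
                          \<and> disjnt (ball2 (2 ^ (n - 1)) n) (ball2 (2 ^ (n0 - 1)) n0))
        \<and> disjnt (ball2 0 n0) (ball2 (2 ^ (n0 - 1)) n0)
        \<and> (\<forall>n\<in>{2..n0 - 1}. typeI d (2 ^ (n - 1)) n (n - 2))
        \<and> typeI d 0 n0 (n0 - 2)
        \<and> typeI d (2 ^ (n0 - 1)) n0 (w - n0)"
proof (intro impI conjI ballI)
  assume "v \<ge> 3 \<and> even v"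
  then have "even v" and v: "v = 2 * (n0 - 1)" "3 \<le> n0" unfolding n0 by (auto elim: evenE)
  have "{2..n0} = insert n0 {2..n0 - 1}" using v by auto
  then show "ball2 0 1 = (\<Union>n\<in>{2..n0 - 1}. ball2 (2 ^ (n - 1)) n) \<union> ball2 0 n0 \<union> ball2 (2 ^ (n0 - 1)) n0"
    using ball2_zero_decomp[of n0] v by auto
  show "disjnt (ball2 (2 ^ (n - 1)) n) (ball2 (2 ^ (m - 1)) m)"
    if "n \<in> {2..n0 - 1}" "m \<in> {2..n0 - 1}" "n \<noteq> m" for n m
    using that by (intro disjnt_ball2_pow2) simp_all
  show "disjnt (ball2 (2 ^ (n - 1)) n) (ball2 0 n0)" if "n \<in> {2..n0 - 1}" for n
    using that by (intro disjnt_ball2_pow2_zero) auto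
  show "disjnt (ball2 (2 ^ (n - 1)) n) (ball2 (2 ^ (n0 - 1)) n0)" if "n \<in> {2..n0 - 1}" for n
    using that by (intro disjnt_ball2_pow2) auto
  show "disjnt (ball2 0 n0) (ball2 (2 ^ (n0 - 1)) n0)"
    using disjnt_ball2_pow2_zero[of n0 n0] v by (simp add: disjnt_sym)
  show "typeI d (2 ^ (n - 1)) n (n - 2)" if "n \<in> {2..n0 - 1}" for n
  proof (rule typeI_pow2)
    show "2 \<le> n" "2*n - 1 \<le> v" using that v by auto
  qed
  have "v - n0 = n0 - 2" using v by arith
  then show "typeI d 0 n0 (n0 - 2)" using typeI_zero unfolding n0[symmetric] by simp
  show "typeI d (2 ^ (n0 - 1)) n0 (w - n0)" using typeI_top[OF \<open>even v\<close>] v unfolding n0[symmetric] by simp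
qed

end

theorem theorem6p6:
  fixes d :: "nat \<Rightarrow> int"
  assumes hd: "padic2 d"
    and h4: "d 2 = 0"
    and hsq: "\<not> (\<exists>y. padic2 y \<and> z2_mult y y = d)"
  shows "fmap d ` ball2 1 1 \<subseteq> ball2 0 1
    \<and> (\<exists>\<E>. finite \<E> \<and> (\<forall>E\<in>\<E>. minimal_component d E) \<and> pairwise disjnt \<E> \<and> \<Union>\<E> = ball2 0 1)
    \<and> (v2 d = 2 \<and> v2 (z2_sub d (z2_of_int 4)) = 3 \<longrightarrow>
         minimal_component d (ball2 0 2) \<and> minimal_component d (ball2 2 3)
       \<and> minimal_component d (ball2 6 3)
       \<and> pairwise disjnt {ball2 0 2, ball2 2 3, ball2 6 3}
       \<and> ball2 0 1 = ball2 0 2 \<union> ball2 2 3 \<union> ball2 6 3)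
    \<and> (v2 d = 2 \<and> v2 (z2_sub d (z2_of_int 4)) = 4 \<longrightarrow>
         minimal_component d (ball2 0 2) \<and> minimal_component d (ball2 2 4)
       \<and> minimal_component d (ball2 6 4) \<and> minimal_component d (ball2 10 4)
       \<and> minimal_component d (ball2 14 4)
       \<and> pairwise disjnt {ball2 0 2, ball2 2 4, ball2 6 4, ball2 10 4, ball2 14 4}
       \<and> ball2 0 1 = ball2 0 2 \<union> ball2 2 4 \<union> ball2 6 4 \<union> ball2 10 4 \<union> ball2 14 4)
    \<and> (let n0 = v2 d div 2 + 1 in
        v2 d \<ge> 3 \<and> odd (v2 d) \<longrightarrow>
          ball2 0 1 = (\<Union>n\<in>{2..n0}. ball2 (2 ^ (n - 1)) n) \<union> ball2 0 n0
        \<and> (\<forall>n\<in>{2..n0}. \<forall>m\<in>{2..n0}. n \<noteq> m \<longrightarrow> disjnt (ball2 (2 ^ (n - 1)) n) (ball2 (2 ^ (m - 1)) m))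
        \<and> (\<forall>n\<in>{2..n0}. disjnt (ball2 (2 ^ (n - 1)) n) (ball2 0 n0))
        \<and> (\<forall>n\<in>{2..n0}. typeI d (2 ^ (n - 1)) n (n - 2))
        \<and> typeI d 0 n0 (n0 - 1))
    \<and> (let n0 = v2 d div 2 + 1 in
        v2 d \<ge> 3 \<and> even (v2 d) \<longrightarrow>
          ball2 0 1 = (\<Union>n\<in>{2..n0 - 1}. ball2 (2 ^ (n - 1)) n) \<union> ball2 0 n0 \<union> ball2 (2 ^ (n0 - 1)) n0
        \<and> (\<forall>n\<in>{2..n0 - 1}. \<forall>m\<in>{2..n0 - 1}. n \<noteq> m \<longrightarrow> disjnt (ball2 (2 ^ (n - 1)) n) (ball2 (2 ^ (m - 1)) m))
        \<and> (\<forall>n\<in>{2..n0 - 1}. disjnt (ball2 (2 ^ (n - 1)) n) (ball2 0 n0)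
                          \<and> disjnt (ball2 (2 ^ (n - 1)) n) (ball2 (2 ^ (n0 - 1)) n0))
        \<and> disjnt (ball2 0 n0) (ball2 (2 ^ (n0 - 1)) n0)
        \<and> (\<forall>n\<in>{2..n0 - 1}. typeI d (2 ^ (n - 1)) n (n - 2))
        \<and> typeI d 0 n0 (n0 - 2)
        \<and> typeI d (2 ^ (n0 - 1)) n0 (v2 (z2_sub d (z2_of_int (2 ^ v2 d))) - n0))"
proof -
  interpret nonsquare_multiple_of_4 d using assms by unfold_locales
  show ?thesis
    unfolding Let_def
    using fmap_odd_ball[OF hd d_1] minimal_partition case_v_2_w_3 case_v_2_w_4
      case_v_odd[OF refl] case_v_even[OF refl]
    by blast
qed

end
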